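(* Let $P_n$ be the law of $\pi_1$ for $\pi$ uniform on $\mathrm{PF}_n$, and $\bar P_n$ the uniform distribution on $[n]$ (the law of $f_1$ for $f$ uniform among all functions $[n]\to[n]$). Then the total variation distance $\|P_n-\bar P_n\|=\frac12\sum_{j=1}^n|P_n(j)-\bar P_n(j)|$ tends to $0$ as $n\to\infty$.
   Context: A parking function of length $n$ is a sequence $(\pi_1,\dots,\pi_n)$ with $1\le\pi_i\le n$ such that $\#\{t:\pi_t\le i\}\ge i$ for all $1\le i\le n$; $\mathrm{PF}_n$ denotes the set of these. *)

theory Defs
  imports "HOL-Analysis.Analysis"
begin

text \<open>A sequence (pi_1,...,pi_n) is represented as a function on the index set
  {0..<n} (position t corresponds to pi_(t+1)), extensional (undefined outside),
  with values in {1..n}.\<close>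

definition parking_functions :: "nat \<Rightarrow> (nat \<Rightarrow> nat) set" where
  "parking_functions n =
     {p \<in> {0..<n} \<rightarrow>\<^sub>E {1..n}.
        \<forall>i\<in>{1..n}. card {t \<in> {0..<n}. p t \<le> i} \<ge> i}"

definition P_first :: "nat \<Rightarrow> nat \<Rightarrow> real" where
  "P_first n j = real (card {p \<in> parking_functions n. p 0 = j}) / real (card (parking_functions n))"

definition Pbar_first :: "nat \<Rightarrow> nat \<Rightarrow> real" where
  "Pbar_first n j = real (card {f \<in> {0..<n} \<rightarrow>\<^sub>E {1..n}. f 0 = j}) / real (card ({0..<n} \<rightarrow>\<^sub>E {1..n}))"

definition tv_dist :: "nat \<Rightarrow> real" where
  "tv_dist n = (1/2) * (\<Sum>j=1..n. \<bar>P_first n j - Pbar_first n j\<bar>)"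

end

theory Submission
  imports Defs
begin

text \<open>Remove the first entry of a parking function of length \<open>n = a + 1\<close>. The remaining tail
  has a first deficient level \<open>k\<close> (the least \<open>i\<close> such that fewer than \<open>i\<close> tail entries are
  at most \<open>i\<close>), and the admissible first entries are exactly \<open>1, \<dots>, k\<close>. Tails breaking at \<open>k\<close>
  split into a parking function on the \<open>k - 1\<close> positions with entries below \<open>k\<close> and a shifted
  one on the other \<open>n - k\<close> positions; with Abel's identity this gives \<open>(m + 1)^(m - 1)\<close> parking
  functions of length \<open>m\<close>. Given \<open>k\<close>, the first entry is uniform on \<open>{1..k}\<close>, so the total
  variation distance is at most the mean of \<open>(n - k)/n\<close> under the size-biased law of \<open>k\<close>.
  Abel's identity turns this mean into a multiple of \<open>\<Sum>k\<le>a. a!/((a - k)! (a + 2)^k) - 1\<close>, and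
  splitting that sum at \<open>K \<approx> sqrt n\<close> bounds the distance by \<open>4 / sqrt n\<close>.\<close>

section \<open>Parking functions on finite index sets\<close>

definition count_le :: "'a set \<Rightarrow> ('a \<Rightarrow> nat) \<Rightarrow> nat \<Rightarrow> nat" where
  "count_le A p i = card {t \<in> A. p t \<le> i}"

definition pf_on :: "'a set \<Rightarrow> ('a \<Rightarrow> nat) set" where
  "pf_on I = {p \<in> I \<rightarrow>\<^sub>E {1..card I}. \<forall>i\<in>{1..card I}. i \<le> count_le I p i}"

definition num_pf :: "nat \<Rightarrow> nat" where
  "num_pf m = card (pf_on {0..<m})"

lemma parking_functions_eq_pf_on: "parking_functions n = pf_on {0..<n}"
  by (simp add: parking_functions_def pf_on_def count_le_def)

lemma pf_onD:
  assumes "p \<in> pf_on I"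
  shows "p \<in> I \<rightarrow>\<^sub>E {1..card I}" and "\<And>t. t \<in> I \<Longrightarrow> 1 \<le> p t \<and> p t \<le> card I"
    and "\<And>t. t \<notin> I \<Longrightarrow> p t = undefined" and "\<And>i. i \<in> {1..card I} \<Longrightarrow> i \<le> count_le I p i"
  using assms unfolding pf_on_def by (auto simp: PiE_def Pi_def extensional_def)

lemma pf_onI:
  "p \<in> I \<rightarrow>\<^sub>E {1..card I} \<Longrightarrow> (\<And>i. i \<in> {1..card I} \<Longrightarrow> i \<le> count_le I p i) \<Longrightarrow> p \<in> pf_on I"
  unfolding pf_on_def by blast

lemma finite_pf_on: "finite I \<Longrightarrow> finite (pf_on I)"
  unfolding pf_on_def by (rule finite_subset[of _ "I \<rightarrow>\<^sub>E {1..card I}"]) (auto intro: finite_PiE)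

lemma count_le_cong: "(\<And>t. t \<in> A \<Longrightarrow> p t = q t) \<Longrightarrow> count_le A p i = count_le A q i"
  unfolding count_le_def by (rule arg_cong[where f = card]) auto

lemma count_le_le_card: "finite A \<Longrightarrow> count_le A p i \<le> card A"
  unfolding count_le_def by (rule card_mono) auto

lemma count_le_bij_betw:
  assumes "bij_betw h J I"
  shows "count_le J (p \<circ> h) i = count_le I p i"
proof -
  have "bij_betw h {t \<in> J. p (h t) \<le> i} {x \<in> I. p x \<le> i}"
    using assms by (auto simp: bij_betw_def inj_on_def)
  then show ?thesis unfolding count_le_def by (simp add: bij_betw_same_card)
qed

lemma restrict_compose_in_pf_on:
  assumes h: "bij_betw h J I" and p: "p \<in> pf_on I"
  shows "restrict (p \<circ> h) J \<in> pf_on J"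
proof (rule pf_onI)
  have cJ: "card J = card I" using bij_betw_same_card[OF h] .
  show "restrict (p \<circ> h) J \<in> J \<rightarrow>\<^sub>E {1..card J}"
    using pf_onD(2)[OF p] h unfolding cJ by (auto simp: bij_betw_def)
  show "i \<le> count_le J (restrict (p \<circ> h) J) i" if "i \<in> {1..card J}" for i
    using pf_onD(4)[OF p, of i] that count_le_bij_betw[OF h, of p i]
      count_le_cong[of J "restrict (p \<circ> h) J" "p \<circ> h" i] unfolding cJ by simp
qed

lemma card_pf_on_bij_betw:
  assumes h: "bij_betw h J I"
  shows "card (pf_on I) = card (pf_on J)"
proof -
  define g where "g = the_inv_into J h"
  have g: "bij_betw g I J" unfolding g_def by (rule bij_betw_the_inv_into[OF h])
  have gh: "t \<in> J \<Longrightarrow> g (h t) = t" and hg: "x \<in> I \<Longrightarrow> h (g x) = x" for t x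
    using h by (auto simp: g_def bij_betw_def the_inv_into_f_f f_the_inv_into_f)
  have hJ: "t \<in> J \<Longrightarrow> h t \<in> I" and gI: "x \<in> I \<Longrightarrow> g x \<in> J" for t x
    using h g by (auto simp: bij_betw_def)
  have "bij_betw (\<lambda>p. restrict (p \<circ> h) J) (pf_on I) (pf_on J)"
  proof (rule bij_betw_byWitness[where f' = "\<lambda>q. restrict (q \<circ> g) I"])
    show "\<forall>p\<in>pf_on I. restrict (restrict (p \<circ> h) J \<circ> g) I = p"
    proof (intro ballI ext)
      fix p x assume "p \<in> pf_on I"
      then show "restrict (restrict (p \<circ> h) J \<circ> g) I x = p x"
        using pf_onD(3)[of p I x] gI hg by (cases "x \<in> I") auto
    qed
    show "\<forall>q\<in>pf_on J. restrict (restrict (q \<circ> g) I \<circ> h) J = q"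
    proof (intro ballI ext)
      fix q x assume "q \<in> pf_on J"
      then show "restrict (restrict (q \<circ> g) I \<circ> h) J x = q x"
        using pf_onD(3)[of q J x] hJ gh by (cases "x \<in> J") auto
    qed
  qed (use restrict_compose_in_pf_on[OF h] restrict_compose_in_pf_on[OF g] in auto)
  then show ?thesis by (rule bij_betw_same_card)
qed

lemma card_pf_on: "finite I \<Longrightarrow> card (pf_on I) = num_pf (card I)"
  unfolding num_pf_def using ex_bij_betw_nat_finite card_pf_on_bij_betw by metis

section \<open>Decomposition by the first entry\<close>

definition pf_first :: "nat \<Rightarrow> nat \<Rightarrow> (nat \<Rightarrow> nat) set" where
  "pf_first a j = {p \<in> pf_on {0..<Suc a}. p 0 = j}"

text \<open>Tails, indexed by \<open>{1..a}\<close>, whose first deficient level is \<open>k\<close>. A first entry \<open>j\<close>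
  completes such a tail to a parking function exactly when \<open>j \<le> k\<close>.\<close>

definition breaks_at :: "nat \<Rightarrow> nat \<Rightarrow> (nat \<Rightarrow> nat) set" where
  "breaks_at a k = {r \<in> {1..a} \<rightarrow>\<^sub>E {1..Suc a}.
     (\<forall>i\<in>{1..<k}. i \<le> count_le {1..a} r i) \<and> count_le {1..a} r k = k - 1 \<and>
     (\<forall>i\<in>{k<..Suc a}. i \<le> count_le {1..a} r i + 1)}"

lemma finite_breaks_at: "finite (breaks_at a k)"
  unfolding breaks_at_def
  by (rule finite_subset[of _ "{1..a} \<rightarrow>\<^sub>E {1..Suc a}"]) (auto intro: finite_PiE)

lemma breaks_at_disjoint: "1 \<le> k \<Longrightarrow> k < k' \<Longrightarrow> breaks_at a k \<inter> breaks_at a k' = {}"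
  unfolding breaks_at_def by force

lemma count_le_first:
  "count_le {0..<Suc a} p i = (if p 0 \<le> i then 1 else 0) + count_le {1..a} p i"
proof -
  have "{t \<in> {0..<Suc a}. p t \<le> i} =
      (if p 0 \<le> i then insert 0 {t \<in> {1..a}. p t \<le> i} else {t \<in> {1..a}. p t \<le> i})"
    by (auto simp: Suc_le_eq intro!: gr0I)
  then show ?thesis unfolding count_le_def by simp
qed

lemma restrict_tail_in_breaks_at:
  assumes "p \<in> pf_first a j"
  shows "\<exists>k\<in>{j..Suc a}. restrict p {1..a} \<in> breaks_at a k"
proof -
  define r where "r = restrict p {1..a}"
  define c where "c i = count_le {1..a} r i" for i
  have p0: "p 0 = j" and pf: "p \<in> pf_on {0..<Suc a}" using assms by (auto simp: pf_first_def)
  have lower: "i \<le> (if j \<le> i then 1 else 0) + c i" if "i \<in> {1..Suc a}" for i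
    using pf_onD(4)[OF pf, of i] that count_le_first[of a p i]
      count_le_cong[of "{1..a}" p r i] by (simp add: p0 r_def c_def)
  define k where "k = (LEAST i. 1 \<le> i \<and> c i < i)"
  have deficient: "1 \<le> Suc a \<and> c (Suc a) < Suc a"
    using count_le_le_card[of "{1..a}" r "Suc a"] by (simp add: c_def)
  have k: "1 \<le> k \<and> c k < k" unfolding k_def by (rule LeastI[of "\<lambda>i. 1 \<le> i \<and> c i < i", OF deficient])
  have k_le: "k \<le> Suc a" unfolding k_def by (rule Least_le[of "\<lambda>i. 1 \<le> i \<and> c i < i", OF deficient])
  have below: "i \<le> c i" if "i \<in> {1..<k}" for i
    using not_less_Least[of i "\<lambda>i. 1 \<le> i \<and> c i < i"] that by (auto simp: k_def)
  have jk: "j \<le> k" using lower[of k] k k_le by (cases "j \<le> k") auto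
  have "c k = k - 1" using lower[of k] k k_le jk by (simp; linarith)
  moreover have "i \<le> c i + 1" if "i \<in> {k<..Suc a}" for i using lower[of i] that k by (auto split: if_splits)
  moreover have "r \<in> {1..a} \<rightarrow>\<^sub>E {1..Suc a}" using pf_onD(1)[OF pf] by (auto simp: r_def)
  ultimately have "r \<in> breaks_at a k" using below by (simp add: breaks_at_def c_def)
  then show ?thesis using jk k_le unfolding r_def by auto
qed

lemma prepend_in_pf_first:
  assumes j: "j \<in> {1..Suc a}" and k: "k \<in> {j..Suc a}" and r: "r \<in> breaks_at a k"
  shows "r(0 := j) \<in> pf_first a j"
proof -
  define c where "c i = count_le {1..a} r i" for i
  have below: "\<forall>i\<in>{1..<k}. i \<le> c i" and ck: "c k = k - 1"
    and above: "\<forall>i\<in>{k<..Suc a}. i \<le> c i + 1" and rf: "r \<in> {1..a} \<rightarrow>\<^sub>E {1..Suc a}"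
    using r unfolding breaks_at_def c_def by auto
  have "r(0 := j) \<in> pf_on {0..<Suc a}"
  proof (rule pf_onI)
    show "r(0 := j) \<in> {0..<Suc a} \<rightarrow>\<^sub>E {1..card {0..<Suc a}}"
      using rf j by (auto simp: PiE_def Pi_def extensional_def)
    fix i assume i: "i \<in> {1..card {0..<Suc a}}"
    have "count_le {0..<Suc a} (r(0 := j)) i = (if j \<le> i then 1 else 0) + c i"
      using count_le_first[of a "r(0 := j)" i] count_le_cong[of "{1..a}" "r(0 := j)" r i]
      by (simp add: c_def)
    moreover have "i \<le> (if j \<le> i then 1 else 0) + c i"
    proof (cases i k rule: linorder_cases)
      case less
      then have "i \<le> c i" using below i by simp
      then show ?thesis by simp
    qed (use ck above i k in auto)
    ultimately show "i \<le> count_le {0..<Suc a} (r(0 := j)) i" by simp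
  qed
  then show ?thesis by (simp add: pf_first_def)
qed

lemma bij_betw_pf_first_breaks_at:
  assumes j: "j \<in> {1..Suc a}"
  shows "bij_betw (\<lambda>p. restrict p {1..a}) (pf_first a j) (\<Union>k\<in>{j..Suc a}. breaks_at a k)"
proof (rule bij_betw_byWitness[where f' = "\<lambda>r. r(0 := j)"])
  show "\<forall>p\<in>pf_first a j. (restrict p {1..a})(0 := j) = p"
  proof (intro ballI ext)
    fix p t assume "p \<in> pf_first a j"
    then have "p 0 = j" and "p \<in> pf_on {0..<Suc a}" by (auto simp: pf_first_def)
    then show "((restrict p {1..a})(0 := j)) t = p t"
      using pf_onD(3)[of p "{0..<Suc a}" t] by (cases "t = 0"; cases "t \<in> {1..a}") auto
  qed
  show "\<forall>r\<in>(\<Union>k\<in>{j..Suc a}. breaks_at a k). restrict (r(0 := j)) {1..a} = r"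
    by (auto simp: breaks_at_def PiE_def extensional_def)
  show "(\<lambda>p. restrict p {1..a}) ` pf_first a j \<subseteq> (\<Union>k\<in>{j..Suc a}. breaks_at a k)"
    using restrict_tail_in_breaks_at by blast
  show "(\<lambda>r. r(0 := j)) ` (\<Union>k\<in>{j..Suc a}. breaks_at a k) \<subseteq> pf_first a j"
    using prepend_in_pf_first[OF j] by blast
qed

lemma card_pf_first:
  assumes j: "j \<in> {1..Suc a}"
  shows "card (pf_first a j) = (\<Sum>k\<in>{j..Suc a}. card (breaks_at a k))"
proof -
  have "card (pf_first a j) = card (\<Union>k\<in>{j..Suc a}. breaks_at a k)"
    by (rule bij_betw_same_card[OF bij_betw_pf_first_breaks_at[OF j]])
  also have "\<dots> = (\<Sum>k\<in>{j..Suc a}. card (breaks_at a k))"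
  proof (rule card_UN_disjoint)
    show "\<forall>k\<in>{j..Suc a}. \<forall>k'\<in>{j..Suc a}. k \<noteq> k' \<longrightarrow> breaks_at a k \<inter> breaks_at a k' = {}"
      using j breaks_at_disjoint[of _ _ a] by (metis Int_commute atLeastAtMost_iff le_trans linorder_neqE_nat)
  qed (auto simp: finite_breaks_at)
  finally show ?thesis .
qed

definition break_pieces :: "nat \<Rightarrow> nat \<Rightarrow> (nat set \<times> (nat \<Rightarrow> nat) \<times> (nat \<Rightarrow> nat)) set" where
  "break_pieces a k =
     (SIGMA S:{S. S \<subseteq> {1..a} \<and> card S = k - 1}. pf_on S \<times> pf_on ({1..a} - S))"

definition glue :: "nat \<Rightarrow> nat \<Rightarrow> nat set \<times> (nat \<Rightarrow> nat) \<times> (nat \<Rightarrow> nat) \<Rightarrow> nat \<Rightarrow> nat" where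
  "glue a k = (\<lambda>(S, u, v) t. if t \<in> S then u t else if t \<in> {1..a} then v t + k else undefined)"

definition cut :: "nat \<Rightarrow> nat \<Rightarrow> (nat \<Rightarrow> nat) \<Rightarrow> nat set \<times> (nat \<Rightarrow> nat) \<times> (nat \<Rightarrow> nat)" where
  "cut a k r = (let S = {t \<in> {1..a}. r t < k}
                in (S, restrict r S, restrict (\<lambda>t. r t - k) ({1..a} - S)))"

lemma card_complement_piece:
  "S \<subseteq> {1..a} \<Longrightarrow> card S = k - 1 \<Longrightarrow> k \<in> {1..Suc a} \<Longrightarrow> card ({1..a} - S) = Suc a - k"
  by (simp add: card_Diff_subset finite_subset)

lemma count_le_0_eq_0_iff: "finite A \<Longrightarrow> count_le A p 0 = 0 \<longleftrightarrow> (\<forall>t\<in>A. 0 < p t)"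
  by (auto simp: count_le_def)

lemma count_le_glue:
  assumes S: "S \<subseteq> {1..a}" and u: "\<And>t. t \<in> S \<Longrightarrow> u t < k"
  shows "i < k \<Longrightarrow> count_le {1..a} (glue a k (S, u, v)) i = count_le S u i"
    and "k \<le> i \<Longrightarrow> count_le {1..a} (glue a k (S, u, v)) i = card S + count_le ({1..a} - S) v (i - k)"
proof -
  have gS: "t \<in> S \<Longrightarrow> glue a k (S, u, v) t = u t"
    and gR: "t \<in> {1..a} - S \<Longrightarrow> glue a k (S, u, v) t = v t + k" for t
    by (auto simp: glue_def)
  show "count_le {1..a} (glue a k (S, u, v)) i = count_le S u i" if "i < k"
  proof -
    have "{t \<in> {1..a}. glue a k (S, u, v) t \<le> i} = {t \<in> S. u t \<le> i}"
    proof (rule set_eqI)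
      fix t show "t \<in> {t \<in> {1..a}. glue a k (S, u, v) t \<le> i} \<longleftrightarrow> t \<in> {t \<in> S. u t \<le> i}"
        using S gS[of t] gR[of t] that by (cases "t \<in> S") auto
    qed
    then show ?thesis by (simp add: count_le_def)
  qed
  show "count_le {1..a} (glue a k (S, u, v)) i = card S + count_le ({1..a} - S) v (i - k)" if "k \<le> i"
  proof -
    have split: "{t \<in> {1..a}. glue a k (S, u, v) t \<le> i} = S \<union> {t \<in> {1..a} - S. v t \<le> i - k}"
    proof (rule set_eqI)
      fix t show "t \<in> {t \<in> {1..a}. glue a k (S, u, v) t \<le> i} \<longleftrightarrow> t \<in> S \<union> {t \<in> {1..a} - S. v t \<le> i - k}"
        using S gS[of t] gR[of t] u[of t] that by (cases "t \<in> S") auto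
    qed
    have "finite S" using S finite_subset by blast
    then show ?thesis unfolding count_le_def split by (subst card_Un_disjoint) auto
  qed
qed

lemma glue_in_breaks_at:
  assumes k: "k \<in> {1..Suc a}" and x: "(S, u, v) \<in> break_pieces a k"
  shows "glue a k (S, u, v) \<in> breaks_at a k"
proof -
  define r where "r = glue a k (S, u, v)"
  have S: "S \<subseteq> {1..a}" "card S = k - 1" and u: "u \<in> pf_on S" and v: "v \<in> pf_on ({1..a} - S)"
    using x unfolding break_pieces_def by auto
  have cR: "card ({1..a} - S) = Suc a - k" using card_complement_piece[OF S k] .
  have u_range: "1 \<le> u t \<and> u t < k" if "t \<in> S" for t
    using pf_onD(2)[OF u that] S k by (simp; linarith)
  have v_range: "1 \<le> v t \<and> v t \<le> Suc a - k" if "t \<in> {1..a} - S" for t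
    using pf_onD(2)[OF v that] cR by simp
  have u_lt: "t \<in> S \<Longrightarrow> u t < k" for t using u_range by blast
  note count = count_le_glue[where S = S and u = u and k = k and v = v, OF S(1) u_lt, folded r_def]
  have "r \<in> {1..a} \<rightarrow>\<^sub>E {1..Suc a}"
  proof (rule PiE_I)
    fix t assume t: "t \<in> {1..a}"
    show "r t \<in> {1..Suc a}"
    proof (cases "t \<in> S")
      case True then show ?thesis using u_range[OF True] k by (simp add: r_def glue_def)
    next
      case False then show ?thesis using v_range[of t] t k by (simp add: r_def glue_def) linarith
    qed
  qed (use S(1) in \<open>auto simp: r_def glue_def\<close>)
  moreover have "i \<le> count_le {1..a} r i" if "i \<in> {1..<k}" for i
    using that count(1)[where i = i] u_range pf_onD(4)[OF u, of i] S by auto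
  moreover have "count_le {1..a} r k = k - 1"
  proof -
    have "\<forall>t\<in>{1..a} - S. 0 < v t" using v_range by (simp add: Suc_le_eq)
    then have "count_le ({1..a} - S) v 0 = 0" by (simp add: count_le_0_eq_0_iff)
    then show ?thesis using count(2)[where i = k] S by simp
  qed
  moreover have "i \<le> count_le {1..a} r i + 1" if i: "i \<in> {k<..Suc a}" for i
  proof -
    have "i - k \<in> {1..card ({1..a} - S)}" using i cR by auto
    then have "i - k \<le> count_le ({1..a} - S) v (i - k)" by (rule pf_onD(4)[OF v])
    then show ?thesis using count(2)[where i = i] u_range i S k by auto
  qed
  ultimately show ?thesis unfolding r_def breaks_at_def by blast
qed

lemma breaks_at_entries_below:
  assumes r: "r \<in> breaks_at a k" and k: "k \<in> {1..Suc a}"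
  shows "{t \<in> {1..a}. r t < k} = {t \<in> {1..a}. r t \<le> k}" and "card {t \<in> {1..a}. r t < k} = k - 1"
proof -
  have ck: "card {t \<in> {1..a}. r t \<le> k} = k - 1" using r by (simp add: breaks_at_def count_le_def)
  show eq: "{t \<in> {1..a}. r t < k} = {t \<in> {1..a}. r t \<le> k}"
  proof (cases "k = 1")
    case True
    then show ?thesis using ck r by (auto simp: breaks_at_def PiE_iff)
  next
    case False
    have below: "k - 1 \<le> card {t \<in> {1..a}. r t \<le> k - 1}"
      using r False k by (auto simp: breaks_at_def count_le_def)
    have sub: "{t \<in> {1..a}. r t \<le> k - 1} \<subseteq> {t \<in> {1..a}. r t \<le> k}" by auto
    have "{t \<in> {1..a}. r t \<le> k - 1} = {t \<in> {1..a}. r t \<le> k}"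
      using card_subset_eq[OF _ sub] card_mono[OF _ sub] below ck by simp
    moreover have "{t \<in> {1..a}. r t < k} = {t \<in> {1..a}. r t \<le> k - 1}" using False k by auto
    ultimately show ?thesis by simp
  qed
  show "card {t \<in> {1..a}. r t < k} = k - 1" unfolding eq by (rule ck)
qed

lemma cut_in_break_pieces:
  assumes k: "k \<in> {1..Suc a}" and r: "r \<in> breaks_at a k"
  shows "cut a k r \<in> break_pieces a k"
proof -
  define S where "S = {t \<in> {1..a}. r t < k}"
  define u where "u = restrict r S"
  define v where "v = restrict (\<lambda>t. r t - k) ({1..a} - S)"
  have rf: "r \<in> {1..a} \<rightarrow>\<^sub>E {1..Suc a}" and below: "\<forall>i\<in>{1..<k}. i \<le> count_le {1..a} r i"
    and above: "\<forall>i\<in>{k<..Suc a}. i \<le> count_le {1..a} r i + 1"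
    using r unfolding breaks_at_def by auto
  have Ssub: "S \<subseteq> {1..a}" by (auto simp: S_def)
  have u_lt: "t \<in> S \<Longrightarrow> u t < k" for t by (simp add: S_def u_def)
  have r_glue: "count_le {1..a} r i = count_le {1..a} (glue a k (S, u, v)) i" for i
    by (rule count_le_cong) (auto simp: glue_def S_def u_def v_def)
  note count = count_le_glue[where S = S and u = u and k = k and v = v, OF Ssub u_lt, folded r_glue]
  have S_le: "S = {t \<in> {1..a}. r t \<le> k}" and cS: "card S = k - 1"
    using breaks_at_entries_below[OF r k] by (simp_all add: S_def)
  have high: "k < r t" if "t \<in> {1..a} - S" for t
    using that unfolding S_le by auto
  have cR: "card ({1..a} - S) = Suc a - k" by (rule card_complement_piece[OF Ssub cS k])
  have "u \<in> pf_on S"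
  proof (rule pf_onI)
    have "1 \<le> r t" if "t \<in> {1..a}" for t using rf that by (auto simp: PiE_iff)
    then show "u \<in> S \<rightarrow>\<^sub>E {1..card S}" using cS by (auto simp: S_def u_def)
    show "i \<le> count_le S u i" if "i \<in> {1..card S}" for i
    proof -
      have i: "i \<in> {1..<k}" using that cS by auto
      then have "i \<le> count_le {1..a} r i" using below by blast
      then show ?thesis using count(1)[where i = i] i by simp
    qed
  qed
  moreover have "v \<in> pf_on ({1..a} - S)"
  proof (rule pf_onI)
    show "v \<in> ({1..a} - S) \<rightarrow>\<^sub>E {1..card ({1..a} - S)}"
    proof (rule PiE_I)
      fix t assume t: "t \<in> {1..a} - S"
      have "r t \<le> Suc a" using rf t by (auto simp: PiE_iff)
      then show "v t \<in> {1..card ({1..a} - S)}" using high[OF t] t cR by (auto simp: v_def)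
    qed (auto simp: v_def)
    show "i \<le> count_le ({1..a} - S) v i" if i: "i \<in> {1..card ({1..a} - S)}" for i
    proof -
      have "k + i \<in> {k<..Suc a}" using i cR k by auto
      then have "k + i \<le> count_le {1..a} r (k + i) + 1" using above by blast
      then show ?thesis using count(2)[where i = "k + i"] cS k by simp
    qed
  qed
  moreover have "cut a k r = (S, u, v)" by (simp add: cut_def S_def u_def v_def Let_def)
  ultimately show ?thesis using Ssub cS by (simp add: break_pieces_def)
qed

lemma bij_betw_glue:
  assumes k: "k \<in> {1..Suc a}"
  shows "bij_betw (glue a k) (break_pieces a k) (breaks_at a k)"
proof (rule bij_betw_byWitness[where f' = "cut a k"])
  show "\<forall>x\<in>break_pieces a k. cut a k (glue a k x) = x"
  proof
    fix x assume x: "x \<in> break_pieces a k"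
    obtain S u v where xe: "x = (S, u, v)" by (cases x)
    have S: "S \<subseteq> {1..a}" "card S = k - 1" and u: "u \<in> pf_on S" and v: "v \<in> pf_on ({1..a} - S)"
      using x by (auto simp: xe break_pieces_def)
    have glue_S: "t \<in> S \<Longrightarrow> glue a k x t = u t"
      and glue_R: "t \<in> {1..a} - S \<Longrightarrow> glue a k x t = v t + k" for t
      by (auto simp: xe glue_def)
    have "{t \<in> {1..a}. glue a k x t < k} = S"
    proof (rule set_eqI)
      fix t show "t \<in> {t \<in> {1..a}. glue a k x t < k} \<longleftrightarrow> t \<in> S"
        using glue_S[of t] glue_R[of t] pf_onD(2)[OF u, of t] S k by (cases "t \<in> S") auto
    qed
    moreover have "restrict (glue a k x) S = u"
    proof
      fix t show "restrict (glue a k x) S t = u t" using glue_S[of t] pf_onD(3)[OF u, of t] by auto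
    qed
    moreover have "restrict (\<lambda>t. glue a k x t - k) ({1..a} - S) = v"
    proof
      fix t show "restrict (\<lambda>t. glue a k x t - k) ({1..a} - S) t = v t"
        using glue_R[of t] pf_onD(3)[OF v, of t] by auto
    qed
    ultimately show "cut a k (glue a k x) = x" by (simp add: cut_def xe Let_def)
  qed
  show "\<forall>r\<in>breaks_at a k. glue a k (cut a k r) = r"
  proof (intro ballI ext)
    fix r t assume "r \<in> breaks_at a k"
    then have "r \<in> extensional {1..a}" by (simp add: breaks_at_def PiE_def)
    then show "glue a k (cut a k r) t = r t" by (auto simp: glue_def cut_def Let_def extensional_def)
  qed
  show "glue a k ` break_pieces a k \<subseteq> breaks_at a k"
    using glue_in_breaks_at[OF k] by auto
  show "cut a k ` breaks_at a k \<subseteq> break_pieces a k"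
    using cut_in_break_pieces[OF k] by auto
qed

lemma card_breaks_at:
  assumes k: "k \<in> {1..Suc a}"
  shows "card (breaks_at a k) = (a choose (k - 1)) * num_pf (k - 1) * num_pf (Suc a - k)"
proof -
  define Sub where "Sub = {S. S \<subseteq> {1..a} \<and> card S = k - 1}"
  have fin: "finite S" if "S \<in> Sub" for S using that finite_subset by (auto simp: Sub_def)
  have "card (breaks_at a k) = card (break_pieces a k)"
    using bij_betw_same_card[OF bij_betw_glue[OF k]] by simp
  also have "\<dots> = (\<Sum>S\<in>Sub. card (pf_on S \<times> pf_on ({1..a} - S)))"
    unfolding break_pieces_def Sub_def[symmetric]
  proof (rule card_SigmaI)
    show "finite Sub" by (rule finite_subset[of _ "Pow {1..a}"]) (auto simp: Sub_def)
  qed (use fin in \<open>auto intro!: finite_cartesian_product finite_pf_on\<close>)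
  also have "\<dots> = (\<Sum>S\<in>Sub. num_pf (k - 1) * num_pf (Suc a - k))"
    using fin card_complement_piece[OF _ _ k]
    by (intro sum.cong) (auto simp: card_cartesian_product card_pf_on Sub_def)
  also have "\<dots> = card Sub * (num_pf (k - 1) * num_pf (Suc a - k))" by simp
  also have "card Sub = a choose (k - 1)" using n_subsets[of "{1..a}" "k - 1"] by (simp add: Sub_def)
  finally show ?thesis by (simp add: mult_ac)
qed

lemma sum_Icc_sum_Icc_ge:
  fixes f :: "nat \<Rightarrow> 'a::comm_semiring_1"
  shows "(\<Sum>j=1..n. \<Sum>k=j..n. f k) = (\<Sum>k=1..n. of_nat k * f k)"
proof (induction n)
  case (Suc n)
  have "(\<Sum>j=1..Suc n. \<Sum>k=j..Suc n. f k) = (\<Sum>j=1..n. (\<Sum>k=j..n. f k) + f (Suc n)) + f (Suc n)"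
    by (simp add: sum.cl_ivl_Suc)
  also have "\<dots> = (\<Sum>k=1..n. of_nat k * f k) + of_nat (Suc n) * f (Suc n)"
    using Suc by (simp add: sum.distrib algebra_simps)
  finally show ?case by (simp add: sum.cl_ivl_Suc)
qed simp

lemma pf_on_Suc_eq_UN: "pf_on {0..<Suc a} = (\<Union>j\<in>{1..Suc a}. pf_first a j)"
  using pf_onD(2)[of _ "{0..<Suc a}" 0] by (auto simp: pf_first_def)

lemma num_pf_Suc: "num_pf (Suc a) = (\<Sum>k=1..Suc a. k * card (breaks_at a k))"
proof -
  have "num_pf (Suc a) = (\<Sum>j=1..Suc a. card (pf_first a j))"
    unfolding num_pf_def pf_on_Suc_eq_UN
    by (rule card_UN_disjoint) (auto simp: pf_first_def finite_pf_on)
  also have "\<dots> = (\<Sum>j=1..Suc a. \<Sum>k=j..Suc a. card (breaks_at a k))"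
    by (rule sum.cong[OF refl]) (rule card_pf_first)
  also have "\<dots> = (\<Sum>k=1..Suc a. k * card (breaks_at a k))"
    using sum_Icc_sum_Icc_ge[of "\<lambda>k. card (breaks_at a k)" "Suc a"] by simp
  finally show ?thesis .
qed

lemma num_pf_0: "num_pf 0 = 1"
proof -
  have "pf_on ({} :: nat set) = {\<lambda>_. undefined}" by (simp add: pf_on_def PiE_empty_domain)
  then show ?thesis by (simp add: num_pf_def)
qed

section \<open>Abel's identity and the number of parking functions\<close>

lemma sum_alternating_binomial_Suc:
  fixes g :: "nat \<Rightarrow> 'a::comm_ring_1"
  shows "(\<Sum>k\<le>Suc n. of_nat (Suc n choose k) * (-1)^(Suc n - k) * g k)
       = (\<Sum>k\<le>n. of_nat (n choose k) * (-1)^(n - k) * (g (Suc k) - g k))"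
proof -
  have shift_lhs: "(\<Sum>k\<le>Suc n. of_nat (Suc n choose k) * (-1)^(Suc n - k) * g k)
     = (-1)^(Suc n) * g 0 + (\<Sum>k\<le>n. of_nat (Suc n choose Suc k) * (-1)^(n - k) * g (Suc k))"
    by (subst sum.atMost_Suc_shift) simp
  have shift_rhs: "(\<Sum>k\<le>Suc n. of_nat (n choose k) * (-1)^(Suc n - k) * g k)
     = (-1)^(Suc n) * g 0 + (\<Sum>k\<le>n. of_nat (n choose Suc k) * (-1)^(n - k) * g (Suc k))"
    by (subst sum.atMost_Suc_shift) simp
  have negate_rhs: "(\<Sum>k\<le>Suc n. of_nat (n choose k) * (-1)^(Suc n - k) * g k)
     = - (\<Sum>k\<le>n. of_nat (n choose k) * (-1)^(n - k) * g k)"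
    by (simp add: Suc_diff_le sum_negf[symmetric] binomial_eq_0)
  show ?thesis
    using shift_lhs shift_rhs negate_rhs by (simp add: algebra_simps sum.distrib sum_subtractf)
qed

lemma sum_alternating_binomial_power:
  fixes x :: "'a::comm_ring_1"
  shows "m \<le> n \<Longrightarrow> (\<Sum>k\<le>n. of_nat (n choose k) * (-1)^(n - k) * (x + of_nat k)^m)
    = (if m = n then of_nat (fact n) else 0)"
proof (induction n arbitrary: m x)
  case (Suc n)
  have "(\<Sum>k\<le>Suc n. of_nat (Suc n choose k) * (-1)^(Suc n - k) * (x + of_nat k)^m)
      = (\<Sum>k\<le>n. of_nat (n choose k) * (-1)^(n - k) * ((x + of_nat (Suc k))^m - (x + of_nat k)^m))"
    by (rule sum_alternating_binomial_Suc)
  also have "\<dots> = (\<Sum>k\<le>n. of_nat (n choose k) * (-1)^(n - k) * (\<Sum>i<m. of_nat (m choose i) * (x + of_nat k)^i))"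
  proof (rule sum.cong[OF refl])
    fix k
    have "(x + of_nat (Suc k))^m = (\<Sum>i\<le>m. of_nat (m choose i) * (x + of_nat k)^i)"
      using binomial_ring[of "x + of_nat k" 1 m] by (simp add: algebra_simps)
    also have "\<dots> = (\<Sum>i<m. of_nat (m choose i) * (x + of_nat k)^i) + (x + of_nat k)^m"
      by (simp add: lessThan_Suc_atMost[symmetric])
    finally show "of_nat (n choose k) * (-1)^(n - k) * ((x + of_nat (Suc k))^m - (x + of_nat k)^m)
      = of_nat (n choose k) * (-1)^(n - k) * (\<Sum>i<m. of_nat (m choose i) * (x + of_nat k)^i)" by simp
  qed
  also have "\<dots> = (\<Sum>i<m. of_nat (m choose i) * (\<Sum>k\<le>n. of_nat (n choose k) * (-1)^(n - k) * (x + of_nat k)^i))"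
    by (simp add: sum_distrib_left sum_distrib_right mult_ac sum.swap[of _ "{..<m}"])
  also have "\<dots> = (\<Sum>i<m. of_nat (m choose i) * (if i = n then of_nat (fact n) else 0))"
    by (rule sum.cong[OF refl]) (use Suc in auto)
  also have "\<dots> = (if m = Suc n then of_nat (fact (Suc n)) else 0)"
  proof (cases "m = Suc n")
    case True
    then have "(\<Sum>i<m. of_nat (m choose i) * (if i = n then of_nat (fact n) else 0))
        = of_nat (Suc n choose n) * (of_nat (fact n) :: 'a)"
      by (simp add: sum.delta' if_distrib[of "\<lambda>v. _ * v"] cong: if_cong)
    then show ?thesis using True by (simp add: algebra_simps of_nat_mult[symmetric] del: of_nat_mult)
  next
    case False
    then show ?thesis using Suc.prems by (intro trans[OF sum.neutral]) auto
  qed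
  finally show ?case .
qed simp

definition falling :: "nat \<Rightarrow> nat \<Rightarrow> real" where
  "falling a k = (\<Prod>i<k. real a - real i)"

definition ffact_poly :: "nat \<Rightarrow> real \<Rightarrow> real" where
  "ffact_poly a s = (\<Sum>k\<le>a. falling a k * s^(a - k))"

definition abel_sum :: "nat \<Rightarrow> real \<Rightarrow> real \<Rightarrow> real" where
  "abel_sum a x y = (\<Sum>j\<le>a. real (a choose j) * (x + real j)^j * (y + real (a - j))^(a - j))"

lemma falling_0 [simp]: "falling a 0 = 1"
  by (simp add: falling_def)

lemma falling_Suc: "falling a (Suc k) = falling a k * (real a - real k)"
  by (simp add: falling_def)

lemma falling_Suc_Suc: "falling (Suc a) (Suc k) = real (Suc a) * falling a k"
  unfolding falling_def by (subst prod.lessThan_Suc_shift) simp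

lemma falling_self: "falling a a = fact a"
  by (induction a) (simp_all add: falling_Suc_Suc)

lemma ffact_poly_Suc: "ffact_poly (Suc a) s = s^(Suc a) + real (Suc a) * ffact_poly a s"
proof -
  have "ffact_poly (Suc a) s = s^(Suc a) + (\<Sum>k\<le>a. falling (Suc a) (Suc k) * s^(a - k))"
    unfolding ffact_poly_def by (subst sum.atMost_Suc_shift) simp
  then show ?thesis by (simp add: falling_Suc_Suc ffact_poly_def sum_distrib_left mult_ac)
qed

lemma ffact_poly_0: "ffact_poly a 0 = fact a"
proof -
  have "ffact_poly a 0 = (\<Sum>k\<le>a. if k = a then falling a k else 0)"
    unfolding ffact_poly_def by (rule sum.cong) auto
  then show ?thesis by (simp add: falling_self)
qed

lemma ffact_poly_deriv:
  "(ffact_poly (Suc a) has_real_derivative (real (Suc a) * ffact_poly a s)) (at s)"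
proof -
  have "(ffact_poly (Suc a) has_real_derivative
      (\<Sum>k\<le>Suc a. falling (Suc a) k * (real (Suc a - k) * s^(Suc a - k - 1)))) (at s)"
    unfolding ffact_poly_def[abs_def]
    by (auto intro!: derivative_eq_intros sum.cong simp: mult_ac)
  moreover have "(\<Sum>k\<le>Suc a. falling (Suc a) k * (real (Suc a - k) * s^(Suc a - k - 1)))
      = (\<Sum>k\<le>a. real (Suc a) * (falling a k * s^(a - k)))"
  proof -
    have "(\<Sum>k\<le>Suc a. falling (Suc a) k * (real (Suc a - k) * s^(Suc a - k - 1)))
        = (\<Sum>k\<le>a. falling (Suc a) k * (real (Suc a - k) * s^(Suc a - k - 1)))"
      by (simp add: sum.atMost_Suc)
    also have "\<dots> = (\<Sum>k\<le>a. real (Suc a) * (falling a k * s^(a - k)))"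
    proof (rule sum.cong[OF refl])
    fix k assume k: "k \<in> {..a}"
    have "falling (Suc a) k * real (Suc a - k) = real (Suc a) * falling a k"
      using k falling_Suc[of "Suc a" k] by (simp add: falling_Suc_Suc of_nat_diff)
    then show "falling (Suc a) k * (real (Suc a - k) * s^(Suc a - k - 1))
        = real (Suc a) * (falling a k * s^(a - k))"
      using k by (simp add: Suc_diff_le mult_ac)
    qed
    finally show ?thesis .
  qed
  ultimately show ?thesis by (simp add: ffact_poly_def sum_distrib_left)
qed

lemma abel_sum_deriv:
  "((\<lambda>y. abel_sum (Suc a) x y) has_real_derivative (real (Suc a) * abel_sum a x (y + 1))) (at y)"
proof -
  have "((\<lambda>y. abel_sum (Suc a) x y) has_real_derivative (\<Sum>j\<le>Suc a. real (Suc a choose j) *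
      (x + real j)^j * (real (Suc a - j) * (y + real (Suc a - j))^(Suc a - j - 1)))) (at y)"
    unfolding abel_sum_def by (auto intro!: derivative_eq_intros sum.cong simp: mult_ac)
  moreover have "(\<Sum>j\<le>Suc a. real (Suc a choose j) *
      (x + real j)^j * (real (Suc a - j) * (y + real (Suc a - j))^(Suc a - j - 1)))
    = (\<Sum>j\<le>a. real (Suc a) * (real (a choose j) * (x + real j)^j * (y + 1 + real (a - j))^(a - j)))"
  proof -
    have "(\<Sum>j\<le>Suc a. real (Suc a choose j) *
        (x + real j)^j * (real (Suc a - j) * (y + real (Suc a - j))^(Suc a - j - 1)))
      = (\<Sum>j\<le>a. real (Suc a choose j) *
        (x + real j)^j * (real (Suc a - j) * (y + real (Suc a - j))^(Suc a - j - 1)))"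
      by (simp add: sum.atMost_Suc)
    also have "\<dots> = (\<Sum>j\<le>a. real (Suc a) *
        (real (a choose j) * (x + real j)^j * (y + 1 + real (a - j))^(a - j)))"
    proof (rule sum.cong[OF refl])
      fix j assume j: "j \<in> {..a}"
      have c: "real (Suc a choose j) * real (Suc a - j) = real (Suc a) * real (a choose j)"
        using binomial_absorb_comp[of "Suc a" j] by (metis diff_Suc_1 of_nat_mult mult.commute)
      have e: "y + real (Suc a - j) = y + 1 + real (a - j)" "Suc a - j - 1 = a - j"
        using j by (simp_all add: Suc_diff_le)
      have "real (Suc a choose j) *
          (x + real j)^j * (real (Suc a - j) * (y + real (Suc a - j))^(Suc a - j - 1))
        = (real (Suc a choose j) * real (Suc a - j)) * ((x + real j)^j * (y + 1 + real (a - j))^(a - j))"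
        unfolding e by (simp only: ac_simps)
      also have "\<dots> = real (Suc a) * (real (a choose j) * (x + real j)^j * (y + 1 + real (a - j))^(a - j))"
        unfolding c by (simp only: ac_simps)
      finally show "real (Suc a choose j) *
          (x + real j)^j * (real (Suc a - j) * (y + real (Suc a - j))^(Suc a - j - 1))
        = real (Suc a) * (real (a choose j) * (x + real j)^j * (y + 1 + real (a - j))^(a - j))" .
    qed
    finally show ?thesis .
  qed
  ultimately show ?thesis by (simp add: abel_sum_def sum_distrib_left)
qed

lemma abel_sum_at_negative:
  "abel_sum n x (- x - real n) = (\<Sum>j\<le>n. real (n choose j) * (-1)^(n - j) * (x + real j)^n)"
  unfolding abel_sum_def
proof (rule sum.cong[OF refl])
  fix j assume j: "j \<in> {..n}"
  have neg: "- x - real n + real (n - j) = - (x + real j)" using j by (simp add: of_nat_diff)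
  have "(- x - real n + real (n - j))^(n - j) = (-1)^(n - j) * (x + real j)^(n - j)"
    unfolding neg by (rule power_minus)
  moreover have "(x + real j)^j * (x + real j)^(n - j) = (x + real j)^n"
    using j by (simp add: power_add[symmetric])
  ultimately show "real (n choose j) * (x + real j)^j * (- x - real n + real (n - j))^(n - j)
      = real (n choose j) * (-1)^(n - j) * (x + real j)^n"
    by (metis (no_types, lifting) mult.assoc mult.left_commute)
qed

text \<open>Abel's binomial identity, proved by differentiating in \<open>y\<close>: both sides satisfy the same
  derivative recursion, and they agree at \<open>y = -x-a\<close> by the finite difference formula.\<close>

lemma abel_sum_eq_ffact_poly: "abel_sum a x y = ffact_poly a (x + y + real a)"
proof (induction a arbitrary: x y)
  case 0 then show ?case by (simp add: abel_sum_def ffact_poly_def)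
next
  case (Suc a)
  define F where "F y = abel_sum (Suc a) x y - ffact_poly (Suc a) (x + y + real (Suc a))" for y
  have "(F has_real_derivative 0) (at y)" for y
  proof -
    have "((\<lambda>y. ffact_poly (Suc a) (x + y + real (Suc a))) has_real_derivative
        (real (Suc a) * ffact_poly a (x + y + real (Suc a)) * 1)) (at y)"
      by (rule DERIV_chain2[OF ffact_poly_deriv]) (auto intro!: derivative_eq_intros)
    from DERIV_diff[OF abel_sum_deriv this]
    have "(F has_real_derivative (real (Suc a) * abel_sum a x (y + 1)
        - real (Suc a) * ffact_poly a (x + y + real (Suc a)) * 1)) (at y)"
      unfolding F_def[abs_def] .
    moreover have "abel_sum a x (y + 1) = ffact_poly a (x + y + real (Suc a))"
      using Suc.IH[of x "y + 1"] by (simp add: algebra_simps)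
    ultimately show ?thesis by simp
  qed
  then have "F y = F (- x - real (Suc a))" by (intro DERIV_isconst_all) blast
  also have "\<dots> = 0"
  proof -
    have "abel_sum (Suc a) x (- x - real (Suc a)) = fact (Suc a)"
      unfolding abel_sum_at_negative using sum_alternating_binomial_power[of "Suc a" "Suc a" x]
      by (simp only: simp_thms if_True of_nat_fact)
    then show ?thesis by (simp add: F_def ffact_poly_0)
  qed
  finally show ?case by (simp add: F_def)
qed

definition pf_formula :: "nat \<Rightarrow> real" where
  "pf_formula m = (real m + 1)^(m - 1)"

lemma Suc_times_pf_formula: "(1 + real j) * pf_formula j = (1 + real j)^j"
  unfolding pf_formula_def by (cases j) (simp_all add: algebra_simps)

lemma sum_choose_pf_formula:
  "(\<Sum>j\<le>a. real (a choose j) * pf_formula j * (1 + real (a - j))^(a - j)) = pf_formula (Suc a)"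
proof (cases a)
  case 0 then show ?thesis by (simp add: pf_formula_def)
next
  case (Suc b)
  define L where "L = (\<Sum>j\<le>a. real (a choose j) * pf_formula j * (1 + real (a - j))^(a - j))"
  have "abel_sum a 1 1 = (\<Sum>j\<le>a. real (a choose j) * ((1 + real j) * pf_formula j) * (1 + real (a - j))^(a - j))"
    unfolding abel_sum_def Suc_times_pf_formula by (simp add: add.commute)
  also have "\<dots> = L + (\<Sum>j\<le>a. real j * (real (a choose j) * pf_formula j * (1 + real (a - j))^(a - j)))"
    by (simp add: L_def algebra_simps sum.distrib)
  also have "(\<Sum>j\<le>a. real j * (real (a choose j) * pf_formula j * (1 + real (a - j))^(a - j)))
      = (\<Sum>i\<le>b. real (Suc b) * (real (b choose i) * (2 + real i)^i * (1 + real (b - i))^(b - i)))"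
  proof -
    have "(\<Sum>j\<le>a. real j * (real (a choose j) * pf_formula j * (1 + real (a - j))^(a - j)))
        = (\<Sum>i\<le>b. real (Suc i) * (real (Suc b choose Suc i) * pf_formula (Suc i) * (1 + real (b - i))^(b - i)))"
      unfolding Suc by (subst sum.atMost_Suc_shift) simp
    also have "\<dots> = (\<Sum>i\<le>b. real (Suc b) * (real (b choose i) * (2 + real i)^i * (1 + real (b - i))^(b - i)))"
    proof (rule sum.cong[OF refl])
      fix i
      have c: "real (Suc i) * real (Suc b choose Suc i) = real (Suc b) * real (b choose i)"
        using Suc_times_binomial[of i b] by (metis of_nat_mult)
      have p: "pf_formula (Suc i) = (2 + real i)^i" by (simp add: pf_formula_def)
      have "real (Suc i) * (real (Suc b choose Suc i) * pf_formula (Suc i) * (1 + real (b - i))^(b - i))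
          = (real (Suc i) * real (Suc b choose Suc i)) * pf_formula (Suc i) * (1 + real (b - i))^(b - i)"
        by (simp only: mult.assoc)
      also have "\<dots> = real (Suc b) * (real (b choose i) * (2 + real i)^i * (1 + real (b - i))^(b - i))"
        by (simp only: c p mult.assoc)
      finally show "real (Suc i) * (real (Suc b choose Suc i) * pf_formula (Suc i) * (1 + real (b - i))^(b - i))
          = real (Suc b) * (real (b choose i) * (2 + real i)^i * (1 + real (b - i))^(b - i))" .
    qed
    finally show ?thesis .
  qed
  also have "\<dots> = real (Suc b) * abel_sum b 2 1" by (simp add: abel_sum_def sum_distrib_left)
  finally have "abel_sum a 1 1 = L + real (Suc b) * abel_sum b 2 1" .
  moreover have "abel_sum a 1 1 = (real a + 2)^a + real (Suc b) * abel_sum b 2 1"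
    unfolding abel_sum_eq_ffact_poly Suc ffact_poly_Suc by (simp add: algebra_simps)
  ultimately show ?thesis by (simp add: L_def pf_formula_def Suc)
qed

lemma pf_formula_recurrence:
  "(\<Sum>k=1..Suc a. real k * real (a choose (k - 1)) * pf_formula (k - 1) * pf_formula (Suc a - k))
    = pf_formula (Suc a)"
proof -
  have "(\<Sum>k=1..Suc a. real k * real (a choose (k - 1)) * pf_formula (k - 1) * pf_formula (Suc a - k))
      = (\<Sum>j=0..a. real (a choose j) * ((1 + real j) * pf_formula j) * pf_formula (a - j))"
    by (simp only: One_nat_def sum.shift_bounds_cl_Suc_ivl) (simp add: ac_simps)
  also have "\<dots> = (\<Sum>j=0..a. real (a choose (a - j)) * pf_formula (a - j) * (1 + real j)^j)"
    unfolding Suc_times_pf_formula by (intro sum.cong refl) (simp add: binomial_symmetric[symmetric])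
  also have "\<dots> = (\<Sum>j\<le>a. real (a choose j) * pf_formula j * (1 + real (a - j))^(a - j))"
    by (subst sum.atLeastAtMost_rev) (auto simp: atMost_atLeast0 intro!: sum.cong)
  also have "\<dots> = pf_formula (Suc a)" by (rule sum_choose_pf_formula)
  finally show ?thesis .
qed

theorem num_pf_eq: "real (num_pf m) = pf_formula m"
proof (induction m rule: less_induct)
  case (less m)
  show ?case
  proof (cases m)
    case 0 then show ?thesis by (simp add: num_pf_0 pf_formula_def)
  next
    case (Suc a)
    have "real (num_pf m) = (\<Sum>k=1..Suc a. real k * real (card (breaks_at a k)))"
      unfolding Suc num_pf_Suc by (simp add: algebra_simps)
    also have "\<dots> = (\<Sum>k=1..Suc a. real k * real (a choose (k - 1)) * pf_formula (k - 1) * pf_formula (Suc a - k))"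
    proof (rule sum.cong[OF refl])
      fix k assume k: "k \<in> {1..Suc a}"
      then have "real (num_pf (k - 1)) = pf_formula (k - 1)" "real (num_pf (Suc a - k)) = pf_formula (Suc a - k)"
        using less Suc by auto
      then show "real k * real (card (breaks_at a k))
          = real k * real (a choose (k - 1)) * pf_formula (k - 1) * pf_formula (Suc a - k)"
        by (simp add: card_breaks_at[OF k])
    qed
    also have "\<dots> = pf_formula m" unfolding Suc by (rule pf_formula_recurrence)
    finally show ?thesis .
  qed
qed

lemma sum_breaks_second_moment:
  "(\<Sum>k=1..Suc a. real k * real (Suc a - k) * real (a choose (k - 1)) * pf_formula (k - 1) * pf_formula (Suc a - k))
    = ffact_poly a (real a + 2) - (real a + 2)^a"
proof -
  define w where "w k = real k * real (a choose (k - 1)) * pf_formula (k - 1)" for k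
  have m: "real m * pf_formula m = (1 + real m)^m - pf_formula m" for m
    using Suc_times_pf_formula[of m] by (simp add: algebra_simps)
  have "(\<Sum>k=1..Suc a. real k * real (Suc a - k) * real (a choose (k - 1)) * pf_formula (k - 1) * pf_formula (Suc a - k))
      = (\<Sum>k=1..Suc a. w k * (real (Suc a - k) * pf_formula (Suc a - k)))"
    by (intro sum.cong refl) (simp only: w_def ac_simps)
  also have "\<dots> = (\<Sum>k=1..Suc a. w k * (1 + real (Suc a - k))^(Suc a - k)) - (\<Sum>k=1..Suc a. w k * pf_formula (Suc a - k))"
    unfolding m by (simp add: right_diff_distrib sum_subtractf)
  also have "(\<Sum>k=1..Suc a. w k * pf_formula (Suc a - k)) = (real a + 2)^a"
    using pf_formula_recurrence[of a] by (simp add: w_def pf_formula_def add_ac)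
  also have "(\<Sum>k=1..Suc a. w k * (1 + real (Suc a - k))^(Suc a - k)) = abel_sum a 1 1"
  proof -
    have "(\<Sum>k=1..Suc a. w k * (1 + real (Suc a - k))^(Suc a - k))
        = (\<Sum>j=0..a. real (a choose j) * ((1 + real j) * pf_formula j) * (1 + real (a - j))^(a - j))"
      by (simp only: One_nat_def sum.shift_bounds_cl_Suc_ivl) (simp add: w_def ac_simps)
    then show ?thesis unfolding Suc_times_pf_formula by (simp add: abel_sum_def atMost_atLeast0)
  qed
  also have "abel_sum a 1 1 = ffact_poly a (real a + 2)" by (simp add: abel_sum_eq_ffact_poly add_ac)
  finally show ?thesis .
qed

section \<open>The total variation bound\<close>

lemma ffact_poly_div_power:
  assumes "s > 0" shows "ffact_poly a s / s^a = (\<Sum>k\<le>a. falling a k / s^k)"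
  unfolding ffact_poly_def sum_divide_distrib
proof (rule sum.cong[OF refl])
  fix k assume "k \<in> {..a}"
  then have "s^a = s^k * s^(a - k)" by (simp add: power_add[symmetric])
  then show "falling a k * s^(a - k) / s^a = falling a k / s^k" using assms by simp
qed

lemma falling_div_power_bounds:
  fixes a :: nat defines "s \<equiv> real a + 2"
  shows "k \<le> a \<Longrightarrow> 0 \<le> falling a k / s^k \<and> falling a k / s^k \<le> 1"
proof (induction k)
  case (Suc k)
  then have IH: "0 \<le> falling a k / s^k" "falling a k / s^k \<le> 1" by auto
  have eq: "falling a (Suc k) / s^(Suc k) = (falling a k / s^k) * ((real a - real k) / s)"
    by (simp add: falling_Suc)
  have f: "0 \<le> (real a - real k) / s" "(real a - real k) / s \<le> 1"
    using Suc.prems by (auto simp: s_def)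
  show ?case unfolding eq using mult_nonneg_nonneg[OF IH(1) f(1)] mult_le_one[OF IH(2) f] by blast
qed simp

lemma falling_div_power_geometric:
  fixes a K :: nat defines "s \<equiv> real a + 2"
  assumes "K \<le> k" "k \<le> a"
  shows "falling a k / s^k \<le> ((s - real K) / s)^(k - K)"
  using assms(2,3)
proof (induction k rule: dec_induct)
  case base then show ?case using falling_div_power_bounds[of K a] by (simp add: s_def)
next
  case (step k)
  have "falling a (Suc k) / s^(Suc k) = (falling a k / s^k) * ((real a - real k) / s)"
    by (simp add: falling_Suc)
  also have "\<dots> \<le> ((s - real K) / s)^(k - K) * ((s - real K) / s)"
  proof (rule mult_mono)
    show "falling a k / s^k \<le> ((s - real K) / s)^(k - K)" using step by simp
    show "(real a - real k) / s \<le> (s - real K) / s" using step by (simp add: s_def divide_right_mono)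
    show "0 \<le> ((s - real K) / s)^(k - K)" using step by (simp add: s_def)
    show "0 \<le> (real a - real k) / s" using step by (simp add: s_def)
  qed
  also have "\<dots> = ((s - real K) / s)^(Suc k - K)" using step by (simp add: Suc_diff_le)
  finally show ?case .
qed

text \<open>The terms with \<open>k < K\<close> are at most \<open>1\<close>; from \<open>K\<close> on they decay geometrically
  with ratio \<open>1 - K/s\<close>.\<close>

lemma ffact_poly_ratio_le:
  assumes K: "1 \<le> K"
  shows "ffact_poly a (real a + 2) / (real a + 2)^a \<le> real K + (real a + 2) / real K"
proof -
  define s where "s = real a + 2"
  define \<theta> where "\<theta> = (s - real K) / s"
  have s: "s > 0" and Kpos: "real K > 0" using K by (auto simp: s_def)
  have ratio: "ffact_poly a s / s^a = (\<Sum>k\<le>a. falling a k / s^k)" by (rule ffact_poly_div_power[OF s])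
  have le_1: "falling a k / s^k \<le> 1" if "k \<le> a" for k
    using falling_div_power_bounds[OF that] by (simp add: s_def)
  show ?thesis
  proof (cases "a < K")
    case True
    have "(\<Sum>k\<le>a. falling a k / s^k) \<le> (\<Sum>k\<le>a. 1)" by (rule sum_mono) (simp add: le_1)
    also have "\<dots> \<le> real K" using True by simp
    finally show ?thesis using ratio s Kpos unfolding s_def by (smt (verit) divide_pos_pos)
  next
    case False
    then have Ka: "K \<le> a" by simp
    have \<theta>: "0 \<le> \<theta>" "\<theta> < 1" using Ka s Kpos by (auto simp: \<theta>_def s_def)
    have "(\<Sum>k\<le>a. falling a k / s^k) = (\<Sum>k<K. falling a k / s^k) + (\<Sum>k=K..a. falling a k / s^k)"
    proof -
      have split: "{..a} = {..<K} \<union> {K..a}" using Ka by auto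
      show ?thesis unfolding split by (rule sum.union_disjoint) auto
    qed
    also have "(\<Sum>k<K. falling a k / s^k) \<le> real K"
      using sum_mono[of "{..<K}" "\<lambda>k. falling a k / s^k" "\<lambda>_. 1"] le_1 Ka by simp
    also have "(\<Sum>k=K..a. falling a k / s^k) \<le> (\<Sum>k=K..a. \<theta>^(k - K))"
      by (rule sum_mono) (use falling_div_power_geometric[of K _ a] in \<open>simp add: s_def \<theta>_def\<close>)
    also have "\<dots> = (\<Sum>i<Suc (a - K). \<theta>^i)"
    proof -
      have "(\<Sum>k=K..a. \<theta>^(k - K)) = (\<Sum>k=0 + K..(a - K) + K. \<theta>^(k - K))" using Ka by simp
      also have "\<dots> = (\<Sum>i=0..a - K. \<theta>^i)" by (subst sum.shift_bounds_cl_nat_ivl) simp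
      finally show ?thesis by (simp add: atLeast0AtMost lessThan_Suc_atMost)
    qed
    also have "\<dots> = (1 - \<theta>^Suc (a - K)) / (1 - \<theta>)" using \<theta> by (subst sum_gp_strict) auto
    also have "\<dots> \<le> 1 / (1 - \<theta>)" using \<theta> by (simp add: divide_right_mono)
    also have "1 / (1 - \<theta>) = s / real K" using s Kpos by (simp add: \<theta>_def field_simps)
    finally show ?thesis using ratio by (simp add: s_def)
  qed
qed

lemma Pbar_first_eq:
  assumes j: "j \<in> {1..n}"
  shows "Pbar_first n j = 1 / real n"
proof -
  obtain a where n: "n = Suc a" using j by (cases n) auto
  have "{f \<in> {0..<n} \<rightarrow>\<^sub>E {1..n}. f 0 = j} = PiE {0..<n} (\<lambda>t. if t = 0 then {j} else {1..n})"
    using j by (auto simp: PiE_iff extensional_def split: if_splits)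
  then have "card {f \<in> {0..<n} \<rightarrow>\<^sub>E {1..n}. f 0 = j} = (\<Prod>t<Suc a. card (if t = 0 then {j} else {1..n}))"
    by (simp add: card_PiE n atLeast0LessThan)
  also have "\<dots> = n ^ a" by (subst prod.lessThan_Suc_shift) (simp add: n)
  finally have "card {f \<in> {0..<n} \<rightarrow>\<^sub>E {1..n}. f 0 = j} = n ^ a" .
  moreover have "card ({0..<n} \<rightarrow>\<^sub>E {1..n}) = n * n ^ a" by (simp add: card_PiE n)
  moreover have "real (n ^ a) > 0" by (simp add: n)
  ultimately show ?thesis unfolding Pbar_first_def of_nat_mult by simp
qed

lemma P_first_eq:
  assumes j: "j \<in> {1..Suc a}"
  shows "P_first (Suc a) j = (\<Sum>k=j..Suc a. real (card (breaks_at a k))) / real (num_pf (Suc a))"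
proof -
  have "{p \<in> parking_functions (Suc a). p 0 = j} = pf_first a j"
    by (simp add: pf_first_def parking_functions_eq_pf_on)
  then show ?thesis
    by (simp add: P_first_def card_pf_first[OF j] num_pf_def parking_functions_eq_pf_on)
qed

lemma sum_abs_indicator_minus_mean:
  assumes k: "k \<in> {1..n}"
  shows "(\<Sum>j=1..n. \<bar>(if j \<le> k then 1 else 0) - real k / real n\<bar>) = 2 * real k * real (n - k) / real n"
proof -
  have n: "real n > 0" and kn: "real k \<le> real n" using k by auto
  have "(\<Sum>j=1..n. \<bar>(if j \<le> k then 1 else 0) - real k / real n\<bar>)
      = (\<Sum>j=1..n. if j \<le> k then 1 - real k / real n else real k / real n)"
    by (rule sum.cong[OF refl]) (use n kn in \<open>auto simp: field_simps\<close>)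
  also have "\<dots> = (\<Sum>j\<in>{1..n} \<inter> {j. j \<le> k}. 1 - real k / real n) + (\<Sum>j\<in>{1..n} \<inter> - {j. j \<le> k}. real k / real n)"
    by (rule sum.If_cases) simp
  also have "{1..n} \<inter> {j. j \<le> k} = {1..k}" using k by auto
  also have "{1..n} \<inter> - {j. j \<le> k} = {k<..n}" by auto
  finally have "(\<Sum>j=1..n. \<bar>(if j \<le> k then 1 else 0) - real k / real n\<bar>)
      = real k * (1 - real k / real n) + real (n - k) * (real k / real n)" by simp
  also have "\<dots> = 2 * real k * real (n - k) / real n" using n kn k by (simp add: of_nat_diff field_simps)
  finally show ?thesis .
qed

lemma P_first_minus_Pbar_first:
  assumes j: "j \<in> {1..Suc a}"
  shows "P_first (Suc a) j - Pbar_first (Suc a) j = (\<Sum>k=1..Suc a.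
    real (card (breaks_at a k)) / real (num_pf (Suc a)) * ((if j \<le> k then 1 else 0) - real k / real (Suc a)))"
proof -
  define n where "n = Suc a"
  define d where "d k = real (card (breaks_at a k))" for k
  define P where "P = real (num_pf n)"
  have P_sum: "P = (\<Sum>k=1..n. real k * d k)"
    by (simp add: P_def n_def d_def num_pf_Suc algebra_simps)
  have P_pos: "P > 0" by (simp add: P_def num_pf_eq pf_formula_def)
  have n_pos: "real n > 0" by (simp add: n_def)
  have tail: "(\<Sum>k=1..n. if j \<le> k then d k else 0) = (\<Sum>k=j..n. d k)"
  proof -
    have "(\<Sum>k=1..n. if j \<le> k then d k else 0) = (\<Sum>k\<in>{1..n} \<inter> {k. j \<le> k}. d k)"
      by (simp add: sum.If_cases)
    also have "{1..n} \<inter> {k. j \<le> k} = {j..n}" using j by (auto simp: n_def)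
    finally show ?thesis .
  qed
  have "(\<Sum>k=1..n. d k / P * ((if j \<le> k then 1 else 0) - real k / real n))
      = (\<Sum>k=1..n. (if j \<le> k then d k else 0) / P - real k * d k / (real n * P))"
    by (rule sum.cong[OF refl]) (use P_pos n_pos in \<open>auto simp: field_simps\<close>)
  also have "\<dots> = (\<Sum>k=j..n. d k) / P - 1 / real n"
    unfolding sum_subtractf sum_divide_distrib[symmetric] tail P_sum[symmetric]
    using P_pos by simp
  also have "\<dots> = P_first n j - Pbar_first n j"
    using P_first_eq[OF j] Pbar_first_eq[OF j] by (simp add: n_def d_def P_def)
  finally show ?thesis by (simp add: n_def d_def P_def)
qed

text \<open>Conditionally on the break point \<open>k\<close> of the tail, \<open>\<pi>\<^sub>1\<close> is uniform on \<open>{1..k}\<close>,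
  which is at distance \<open>(n - k)/n\<close> from the uniform law on \<open>{1..n}\<close>; the bound is
  convexity of the total variation distance.\<close>

lemma tv_dist_le_break_moment:
  "tv_dist (Suc a) \<le> (\<Sum>k=1..Suc a. real (card (breaks_at a k)) * real k * real (Suc a - k))
      / (real (Suc a) * real (num_pf (Suc a)))"
proof -
  define n where "n = Suc a"
  define w where "w k = real (card (breaks_at a k)) / real (num_pf n)" for k
  define c where "c j k = (if j \<le> k then 1 else 0) - real k / real n" for j k :: nat
  have n_pos: "real n > 0" by (simp add: n_def)
  have P_pos: "real (num_pf n) > 0" by (simp add: num_pf_eq pf_formula_def)
  have w_nonneg: "w k \<ge> 0" for k by (simp add: w_def)
  have "tv_dist n = (1/2) * (\<Sum>j=1..n. \<bar>\<Sum>k=1..n. w k * c j k\<bar>)"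
    unfolding tv_dist_def using P_first_minus_Pbar_first by (simp add: n_def w_def c_def)
  also have "\<dots> \<le> (1/2) * (\<Sum>j=1..n. \<Sum>k=1..n. w k * \<bar>c j k\<bar>)"
  proof -
    have "\<bar>\<Sum>k=1..n. w k * c j k\<bar> \<le> (\<Sum>k=1..n. \<bar>w k * c j k\<bar>)" for j
      by (rule sum_abs)
    also have "(\<Sum>k=1..n. \<bar>w k * c j k\<bar>) = (\<Sum>k=1..n. w k * \<bar>c j k\<bar>)" for j
      using w_nonneg by (simp add: abs_mult)
    finally show ?thesis by (intro mult_left_mono sum_mono) auto
  qed
  also have "(\<Sum>j=1..n. \<Sum>k=1..n. w k * \<bar>c j k\<bar>) = (\<Sum>k=1..n. w k * (\<Sum>j=1..n. \<bar>c j k\<bar>))"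
    by (subst sum.swap) (simp add: sum_distrib_left)
  also have "\<dots> = (\<Sum>k=1..n. w k * (2 * real k * real (n - k) / real n))"
  proof (rule sum.cong[OF refl])
    fix k assume "k \<in> {1..n}"
    then show "w k * (\<Sum>j=1..n. \<bar>c j k\<bar>) = w k * (2 * real k * real (n - k) / real n)"
      unfolding c_def by (simp only: sum_abs_indicator_minus_mean)
  qed
  also have "(1/2) * \<dots> = (\<Sum>k=1..n. real (card (breaks_at a k)) * real k * real (n - k))
      / (real n * real (num_pf n))"
    unfolding sum_distrib_left sum_divide_distrib
    by (rule sum.cong[OF refl]) (use n_pos P_pos in \<open>simp add: w_def field_simps\<close>)
  finally show ?thesis unfolding n_def .
qed

lemma tv_dist_Suc_le:
  assumes K: "1 \<le> K"
  shows "tv_dist (Suc a) \<le> real K / real (Suc a) + 2 / real K"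
proof -
  define s where "s = real a + 2"
  have s: "s > 0" "s^a > 0" by (simp_all add: s_def)
  have "(\<Sum>k=1..Suc a. real (card (breaks_at a k)) * real k * real (Suc a - k))
      = (\<Sum>k=1..Suc a. real k * real (Suc a - k) * real (a choose (k - 1))
          * pf_formula (k - 1) * pf_formula (Suc a - k))"
    by (intro sum.cong refl) (simp add: card_breaks_at num_pf_eq)
  also have "\<dots> = ffact_poly a s - s^a" unfolding s_def by (rule sum_breaks_second_moment)
  moreover have "real (num_pf (Suc a)) = s^a" by (simp add: num_pf_eq pf_formula_def s_def add_ac)
  ultimately have "tv_dist (Suc a) \<le> (ffact_poly a s - s^a) / (real (Suc a) * s^a)"
    using tv_dist_le_break_moment[of a] by simp
  also have "\<dots> = (ffact_poly a s / s^a - 1) / real (Suc a)"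
    using s by (simp add: field_simps)
  also have "\<dots> \<le> (real K + s / real K) / real (Suc a)"
    using ffact_poly_ratio_le[OF K, of a] by (simp add: s_def divide_right_mono)
  also have "\<dots> = real K / real (Suc a) + (s / real (Suc a)) / real K"
    by (simp add: add_divide_distrib)
  also have "\<dots> \<le> real K / real (Suc a) + 2 / real K"
    using K by (simp add: s_def divide_right_mono divide_le_eq)
  finally show ?thesis .
qed

lemma tv_dist_le_sqrt:
  assumes "n > 0" shows "tv_dist n \<le> 4 / sqrt (real n)"
proof -
  define K where "K = nat \<lceil>sqrt (real n)\<rceil>"
  obtain a where n: "n = Suc a" using assms by (cases n) auto
  have r: "sqrt (real n) \<ge> 1" using assms by simp
  have K_ge: "real K \<ge> sqrt (real n)" using r by (simp add: K_def)
  have "real K = of_int \<lceil>sqrt (real n)\<rceil>" using r by (simp add: K_def)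
  then have K_le: "real K \<le> 2 * sqrt (real n)"
    using of_int_ceiling_le_add_one[of "sqrt (real n)"] r by linarith
  have "tv_dist n \<le> real K / real n + 2 / real K"
    using tv_dist_Suc_le[of K a] K_ge r by (simp add: n)
  also have "real K / real n \<le> 2 * sqrt (real n) / real n"
    using K_le by (simp add: divide_right_mono)
  also have "2 * sqrt (real n) / real n = 2 / sqrt (real n)"
    using r by (simp add: field_simps)
  also have "2 / real K \<le> 2 / sqrt (real n)"
    using K_ge r by (simp add: frac_le)
  finally show ?thesis by simp
qed

lemma tv_dist_nonneg: "tv_dist n \<ge> 0"
  by (simp add: tv_dist_def sum_nonneg)

theorem corollary4:
  shows "tv_dist \<longlonglongrightarrow> 0"
proof (rule Lim_null_comparison)
  show "\<forall>\<^sub>F n in sequentially. norm (tv_dist n) \<le> 4 / sqrt (real n)"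
    using eventually_gt_at_top[of 0] by eventually_elim (simp add: tv_dist_nonneg tv_dist_le_sqrt)
  show "(\<lambda>n. 4 / sqrt (real n)) \<longlonglongrightarrow> 0"
    by (intro tendsto_divide_0[OF tendsto_const] filterlim_at_top_imp_at_infinity
        filterlim_compose[OF sqrt_at_top filterlim_real_sequentially])
qed

end
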